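(* For $1\le n\le\infty$, the category of (left) $\mathcal C_n$-modules in the symmetric monoidal category of vertical bicomplexes is isomorphic to the category $\mathrm{Ch}_n$ of $n$-multicomplexes: a module $(M,d_0^M,\lambda)$ corresponds to the $n$-multicomplex $(M,d_0^M,d_1^M,d_2^M,\dots)$ with $d_i^M(m)=\lambda(d_i\otimes m)$ for $i\ge1$, and module morphisms correspond to morphisms of $n$-multicomplexes.
   Context: $R$ is a commutative unital ring. For $1\le n\le\infty$, an $n$-multicomplex is a $\mathbb Z\times\mathbb Z$-bigraded $R$-module $A$ with $R$-linear maps $d_i$ ($i\ge0$) of bidegree $(-i,1-i)$ such that $\sum_{i+j=l}(-1)^id_id_j=0$ for all $l\ge0$ and $d_i=0$ for $i\ge n$; morphisms are bidegree $(0,0)$ maps commuting with all $d_i$; the category is $\mathrm{Ch}_n$. A vertical bicomplex is a $1$-multicomplex (only $d_0$, with $d_0^2=0$); vertical bicomplexes form a symmetric monoidal category under $(A\otimes B,d_0\otimes1+1\otimes d_0)$ with Koszul signs for the pairing $\langle(x_1,x_2),(y_1,y_2)\rangle=x_1y_1+x_2y_2$. A monoid there ("dg algebra") is a bigraded unital associative algebra with a square-zero derivation of bidegree $(0,1)$; a module over it is a vertical bicomplex $M$ with an action $\lambda$ compatible with differentials. $\mathcal C_\infty=R\langle d_1,d_2,\dots\rangle$ is the free bigraded associative unital $R$-algebra on generators $d_i$ ($i\ge1$) of bidegree $(-i,1-i)$. For $k\ge1$ let $S_k=\sum_{i+j=k,\ i,j\ge1}(-1)^{i+1}d_id_j$ (so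 $S_1=0$). $\delta_0$ is the unique derivation of bidegree $(0,1)$ with $\delta_0(d_i)=S_i$, satisfying $\delta_0(xy)=\delta_0(x)y+(-1)^{x_2}x\delta_0(y)$ for $x$ of bidegree $(x_1,x_2)$. For $n\ge1$, $I_n$ is the two-sided ideal generated by $S_k$ and $d_k$ for all $k\ge n$, $I_\infty=0$, and $\mathcal C_n=(\mathcal C_\infty/I_n,\delta_0)$. *)

theory Defs
  imports Main "HOL-Library.Extended_Nat"
begin

text \<open>A bigraded R-module is a family of sub-R-modules A p q of an ambient
R-module (type 'm with scalar action scale).\<close>

definition bigraded_module ::
  "('r::comm_ring_1 \<Rightarrow> 'm::ab_group_add \<Rightarrow> 'm) \<Rightarrow> (int \<Rightarrow> int \<Rightarrow> 'm set) \<Rightarrow> bool" where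
  "bigraded_module scale A \<longleftrightarrow> module scale \<and>
     (\<forall>p q. 0 \<in> A p q \<and> (\<forall>x\<in>A p q. \<forall>y\<in>A p q. x + y \<in> A p q)
            \<and> (\<forall>r. \<forall>x\<in>A p q. scale r x \<in> A p q))"

definition lin_map ::
  "('r::comm_ring_1 \<Rightarrow> 'm::ab_group_add \<Rightarrow> 'm) \<Rightarrow> ('r \<Rightarrow> 'n::ab_group_add \<Rightarrow> 'n)
   \<Rightarrow> 'm set \<Rightarrow> 'n set \<Rightarrow> ('m \<Rightarrow> 'n) \<Rightarrow> bool" where
  "lin_map scale scale' S T f \<longleftrightarrow>
     (\<forall>x\<in>S. f x \<in> T) \<and> (\<forall>x\<in>S. \<forall>y\<in>S. f (x + y) = f x + f y)
     \<and> (\<forall>r. \<forall>x\<in>S. f (scale r x) = scale' r (f x))"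

text \<open>d i p q is the component of d_i on A p q, of bidegree (-i, 1-i).
n :: enat, with \<infinity> allowed.\<close>

definition multicomplex ::
  "enat \<Rightarrow> ('r::comm_ring_1 \<Rightarrow> 'm::ab_group_add \<Rightarrow> 'm) \<Rightarrow> (int \<Rightarrow> int \<Rightarrow> 'm set)
   \<Rightarrow> (nat \<Rightarrow> int \<Rightarrow> int \<Rightarrow> 'm \<Rightarrow> 'm) \<Rightarrow> bool" where
  "multicomplex n scale A d \<longleftrightarrow> bigraded_module scale A \<and>
     (\<forall>i p q. lin_map scale scale (A p q) (A (p - int i) (q + 1 - int i)) (d i p q)) \<and>
     (\<forall>l p q. \<forall>m\<in>A p q.
        (\<Sum>j\<le>l. scale ((-1) ^ (l - j))
            (d (l - j) (p - int j) (q + 1 - int j) (d j p q m))) = 0) \<and>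
     (\<forall>i p q. enat i \<ge> n \<longrightarrow> (\<forall>m\<in>A p q. d i p q m = 0))"

definition multicomplex_morphism ::
  "('r::comm_ring_1 \<Rightarrow> 'm::ab_group_add \<Rightarrow> 'm) \<Rightarrow> ('r \<Rightarrow> 'n::ab_group_add \<Rightarrow> 'n)
   \<Rightarrow> (int \<Rightarrow> int \<Rightarrow> 'm set) \<Rightarrow> (int \<Rightarrow> int \<Rightarrow> 'n set)
   \<Rightarrow> (nat \<Rightarrow> int \<Rightarrow> int \<Rightarrow> 'm \<Rightarrow> 'm) \<Rightarrow> (nat \<Rightarrow> int \<Rightarrow> int \<Rightarrow> 'n \<Rightarrow> 'n)
   \<Rightarrow> (int \<Rightarrow> int \<Rightarrow> 'm \<Rightarrow> 'n) \<Rightarrow> bool" where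
  "multicomplex_morphism scale scale' A B d e f \<longleftrightarrow>
     (\<forall>p q. lin_map scale scale' (A p q) (B p q) (f p q)) \<and>
     (\<forall>i p q. \<forall>m\<in>A p q. f (p - int i) (q + 1 - int i) (d i p q m) = e i p q (f p q m))"

definition vbicomplex ::
  "('r::comm_ring_1 \<Rightarrow> 'm::ab_group_add \<Rightarrow> 'm) \<Rightarrow> (int \<Rightarrow> int \<Rightarrow> 'm set)
   \<Rightarrow> (int \<Rightarrow> int \<Rightarrow> 'm \<Rightarrow> 'm) \<Rightarrow> bool" where
  "vbicomplex scale A d0 \<longleftrightarrow> bigraded_module scale A \<and>
     (\<forall>p q. lin_map scale scale (A p q) (A p (q + 1)) (d0 p q)) \<and>
     (\<forall>p q. \<forall>m\<in>A p q. d0 p (q + 1) (d0 p q m) = 0)"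

text \<open>An element is a finitely supported R-valued function on words
(lists of letters i \<ge> 1, the letter i standing for the generator d_i).\<close>

type_synonym 'r fa = "nat list \<Rightarrow> 'r"

definition fa_elem :: "'r::comm_ring_1 fa \<Rightarrow> bool" where
  "fa_elem x \<longleftrightarrow> finite {w. x w \<noteq> 0} \<and> (\<forall>w. x w \<noteq> 0 \<longrightarrow> (\<forall>i\<in>set w. 1 \<le> i))"

definition fa_mult :: "'r::comm_ring_1 fa \<Rightarrow> 'r fa \<Rightarrow> 'r fa" where
  "fa_mult x y = (\<lambda>w. \<Sum>k\<le>length w. x (take k w) * y (drop k w))"

definition fa_one :: "'r::comm_ring_1 fa" where
  "fa_one = (\<lambda>w. if w = [] then 1 else 0)"

definition word :: "nat list \<Rightarrow> 'r::comm_ring_1 fa" where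
  "word u = (\<lambda>w. if w = u then 1 else 0)"

definition gen :: "nat \<Rightarrow> 'r::comm_ring_1 fa" where
  "gen i = word [i]"

text \<open>Bidegree of a word: d_i has bidegree (-i, 1-i).\<close>
definition wdeg :: "nat list \<Rightarrow> int \<times> int" where
  "wdeg w = (- int (sum_list w), int (length w) - int (sum_list w))"

definition homog :: "int \<times> int \<Rightarrow> 'r::comm_ring_1 fa \<Rightarrow> bool" where
  "homog ab x \<longleftrightarrow> fa_elem x \<and> (\<forall>w. x w \<noteq> 0 \<longrightarrow> wdeg w = ab)"

definition Sk :: "nat \<Rightarrow> 'r::comm_ring_1 fa" where
  "Sk k = (\<lambda>w. \<Sum>i\<in>{1..<k}. (-1) ^ (i + 1) * fa_mult (gen i) (gen (k - i)) w)"

text \<open>The derivation delta_0 with delta_0(d_i) = S_i and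
delta_0(xy) = delta_0(x) y + (-1)^(x_2) x delta_0(y), on words
(d_i has x_2 = 1 - i, so the sign is (-1)^(i+1)), extended linearly.\<close>
primrec delta_word :: "nat list \<Rightarrow> 'r::comm_ring_1 fa" where
  "delta_word [] = (\<lambda>_. 0)"
| "delta_word (i # w) = (\<lambda>v. fa_mult (Sk i) (word w) v
                              + (-1) ^ (i + 1) * fa_mult (gen i) (delta_word w) v)"

definition delta0 :: "'r::comm_ring_1 fa \<Rightarrow> 'r fa" where
  "delta0 x = (\<lambda>v. \<Sum>w\<in>{w. x w \<noteq> 0}. x w * delta_word w v)"

inductive_set In_ideal :: "enat \<Rightarrow> 'r::comm_ring_1 fa set" for n where
  zero: "(\<lambda>_. 0) \<in> In_ideal n"
| gen_d: "1 \<le> k \<Longrightarrow> n \<le> enat k \<Longrightarrow> gen k \<in> In_ideal n"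
| gen_S: "1 \<le> k \<Longrightarrow> n \<le> enat k \<Longrightarrow> Sk k \<in> In_ideal n"
| add: "x \<in> In_ideal n \<Longrightarrow> y \<in> In_ideal n \<Longrightarrow> (\<lambda>w. x w + y w) \<in> In_ideal n"
| mult_left: "x \<in> In_ideal n \<Longrightarrow> fa_elem a \<Longrightarrow> fa_mult a x \<in> In_ideal n"
| mult_right: "x \<in> In_ideal n \<Longrightarrow> fa_elem a \<Longrightarrow> fa_mult x a \<in> In_ideal n"

text \<open>A C_n-module structure on the vertical bicomplex (A, d0) is a bidegree
(0,0) map lambda : C_n \<otimes> M \<rightarrow> M. It is encoded as lam p q c m for c a
homogeneous element of C_infinity and m \<in> A p q, i.e. as a C_infinity action
vanishing on I_n (= an action of the quotient C_n = C_infinity / I_n).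
Compatibility with differentials uses the Koszul sign (-1)^b for c of
bidegree (a,b).\<close>

definition Cn_module ::
  "enat \<Rightarrow> ('r::comm_ring_1 \<Rightarrow> 'm::ab_group_add \<Rightarrow> 'm) \<Rightarrow> (int \<Rightarrow> int \<Rightarrow> 'm set)
   \<Rightarrow> (int \<Rightarrow> int \<Rightarrow> 'm \<Rightarrow> 'm) \<Rightarrow> (int \<Rightarrow> int \<Rightarrow> 'r fa \<Rightarrow> 'm \<Rightarrow> 'm) \<Rightarrow> bool" where
  "Cn_module n scale A d0 lam \<longleftrightarrow> vbicomplex scale A d0 \<and>
     (\<forall>a b p q c. homog (a, b) c \<longrightarrow>
        lin_map scale scale (A p q) (A (p + a) (q + b)) (lam p q c)) \<and>
     (\<forall>a b p q c c'. homog (a, b) c \<longrightarrow> homog (a, b) c' \<longrightarrow>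
        (\<forall>m\<in>A p q. lam p q (\<lambda>w. c w + c' w) m = lam p q c m + lam p q c' m)) \<and>
     (\<forall>a b p q c r. homog (a, b) c \<longrightarrow>
        (\<forall>m\<in>A p q. lam p q (\<lambda>w. r * c w) m = scale r (lam p q c m))) \<and>
     (\<forall>p q. \<forall>m\<in>A p q. lam p q fa_one m = m) \<and>
     (\<forall>a b a' b' p q c c'. homog (a, b) c \<longrightarrow> homog (a', b') c' \<longrightarrow>
        (\<forall>m\<in>A p q. lam p q (fa_mult c c') m = lam (p + a') (q + b') c (lam p q c' m))) \<and>
     (\<forall>a b p q c. homog (a, b) c \<longrightarrow> c \<in> In_ideal n \<longrightarrow>
        (\<forall>m\<in>A p q. lam p q c m = 0)) \<and>
     (\<forall>a b p q c. homog (a, b) c \<longrightarrow>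
        (\<forall>m\<in>A p q. d0 (p + a) (q + b) (lam p q c m)
           = lam p q (delta0 c) m
             + scale (if even b then 1 else -1) (lam p (q + 1) c (d0 p q m))))"

definition Cn_module_morphism ::
  "('r::comm_ring_1 \<Rightarrow> 'm::ab_group_add \<Rightarrow> 'm) \<Rightarrow> ('r \<Rightarrow> 'n::ab_group_add \<Rightarrow> 'n)
   \<Rightarrow> (int \<Rightarrow> int \<Rightarrow> 'm set) \<Rightarrow> (int \<Rightarrow> int \<Rightarrow> 'n set)
   \<Rightarrow> (int \<Rightarrow> int \<Rightarrow> 'm \<Rightarrow> 'm) \<Rightarrow> (int \<Rightarrow> int \<Rightarrow> 'n \<Rightarrow> 'n)
   \<Rightarrow> (int \<Rightarrow> int \<Rightarrow> 'r fa \<Rightarrow> 'm \<Rightarrow> 'm) \<Rightarrow> (int \<Rightarrow> int \<Rightarrow> 'r fa \<Rightarrow> 'n \<Rightarrow> 'n)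
   \<Rightarrow> (int \<Rightarrow> int \<Rightarrow> 'm \<Rightarrow> 'n) \<Rightarrow> bool" where
  "Cn_module_morphism scale scale' A B d0 e0 lam mu f \<longleftrightarrow>
     (\<forall>p q. lin_map scale scale' (A p q) (B p q) (f p q)) \<and>
     (\<forall>p q. \<forall>m\<in>A p q. f p (q + 1) (d0 p q m) = e0 p q (f p q m)) \<and>
     (\<forall>a b p q c. homog (a, b) c \<longrightarrow>
        (\<forall>m\<in>A p q. f (p + a) (q + b) (lam p q c m) = mu p q c (f p q m)))"

definition assoc_d ::
  "(int \<Rightarrow> int \<Rightarrow> 'm \<Rightarrow> 'm) \<Rightarrow> (int \<Rightarrow> int \<Rightarrow> 'r::comm_ring_1 fa \<Rightarrow> 'm \<Rightarrow> 'm)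
   \<Rightarrow> nat \<Rightarrow> int \<Rightarrow> int \<Rightarrow> 'm \<Rightarrow> 'm" where
  "assoc_d d0 lam i = (if i = 0 then d0 else (\<lambda>p q. lam p q (gen i)))"

end

theory Submission
  imports Defs
begin

text \<open>
  A multicomplex structure (d_i) on A gives an action of the free algebra C_\<infinity>: a word
  d_i1 \<dots> d_ik acts by the composite of the maps d_i, extended linearly. Splitting off the terms
  j = 0 and j = l of the l-th multicomplex relation leaves exactly the action of S_l, so the
  relation reads d_0 d_l + (-1)^l d_l d_0 = S_l; this is the Leibniz rule for \<delta>_0 on a generator,
  and by induction on words the action is compatible with \<delta>_0 on all of C_\<infinity>. For k \<ge> n the
  vanishing of d_k, and through the same relation that of S_k, shows that the ideal I_n acts by
  zero. Conversely, every homogeneous element is a combination of words, so a module action is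
  the one induced by the maps \<lambda>(d_i \<otimes> -), which satisfy the multicomplex relations because
  the action commutes with \<delta>_0; and a map commuting with the generators commutes with every word.
\<close>

definition fa_supp :: "'r::comm_ring_1 fa \<Rightarrow> nat list set" where
  "fa_supp c = {w. c w \<noteq> 0}"

lemma wdeg_Nil [simp]: "wdeg [] = (0, 0)"
  by (simp add: wdeg_def)

lemma wdeg_Cons: "wdeg (i # w) = (fst (wdeg w) - int i, snd (wdeg w) + 1 - int i)"
  by (simp add: wdeg_def)

lemma wdeg_append: "wdeg (u @ v) = (fst (wdeg u) + fst (wdeg v), snd (wdeg u) + snd (wdeg v))"
  by (simp add: wdeg_def)

lemma wdeg_append_eq_iff_right:
  "wdeg (u @ v) = (a, b) \<longleftrightarrow> wdeg v = (a - fst (wdeg u), b - snd (wdeg u))"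
  by (auto simp: wdeg_append prod_eq_iff)

lemma wdeg_append_eq_iff_left:
  "wdeg (u @ v) = (a, b) \<longleftrightarrow> wdeg u = (a - fst (wdeg v), b - snd (wdeg v))"
  by (auto simp: wdeg_append prod_eq_iff)

lemma parity_sign_Cons:
  "(if even (b + 1 - int i) then 1 else -1 :: 'r::comm_ring_1) = - ((-1) ^ i * (if even b then 1 else -1))"
proof (cases "even i")
  case True
  then have "even (b + 1 - int i) \<longleftrightarrow> odd b" by (auto simp: even_add)
  then show ?thesis using True by auto
next
  case False
  then have "even (b + 1 - int i) \<longleftrightarrow> even b" by (auto simp: even_add)
  then show ?thesis using False by auto
qed

lemma word_apply: "word u w = (if w = u then 1 else 0)"
  by (simp add: word_def)

lemma fa_supp_word [simp]: "fa_supp (word u) = {u}"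
  by (auto simp: fa_supp_def word_apply)

lemma finite_fa_supp_word: "finite (fa_supp (word u))"
  by simp

lemma fa_supp_gen [simp]: "fa_supp (gen i) = {[i]}"
  by (simp add: gen_def)

lemma fa_supp_add_subset: "fa_supp (\<lambda>w. x w + y w) \<subseteq> fa_supp x \<union> fa_supp y"
  by (auto simp: fa_supp_def)

lemma fa_supp_smult_subset: "fa_supp (\<lambda>w. r * x w) \<subseteq> fa_supp x"
  by (auto simp: fa_supp_def)

lemma fa_supp_sum_subset: "fa_supp (\<lambda>w. \<Sum>i\<in>I. f i w) \<subseteq> (\<Union>i\<in>I. fa_supp (f i))"
  by (auto simp: fa_supp_def intro: sum.neutral)

lemma finite_fa_supp_add:
  "finite (fa_supp x) \<Longrightarrow> finite (fa_supp y) \<Longrightarrow> finite (fa_supp (\<lambda>w. x w + y w))"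
  by (rule finite_subset[OF fa_supp_add_subset]) simp

lemma finite_fa_supp_smult: "finite (fa_supp x) \<Longrightarrow> finite (fa_supp (\<lambda>w. r * x w))"
  by (rule finite_subset[OF fa_supp_smult_subset])

lemma fa_sum_words:
  assumes "finite (fa_supp c)"
  shows "(\<lambda>v. \<Sum>w\<in>fa_supp c. c w * word w v) = c"
proof
  fix v
  show "(\<Sum>w\<in>fa_supp c. c w * word w v) = c v"
    using assms by (cases "v \<in> fa_supp c") (auto simp: word_apply fa_supp_def if_distrib cong: if_cong)
qed

lemma fa_mult_expand:
  assumes "finite (fa_supp x)" "finite (fa_supp y)"
  shows "fa_mult x y w = (\<Sum>(u, v)\<in>fa_supp x \<times> fa_supp y. x u * y v * word (u @ v) w)"
proof -
  let ?S = "{uv \<in> fa_supp x \<times> fa_supp y. fst uv @ snd uv = w}"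
  have "(\<Sum>(u, v)\<in>fa_supp x \<times> fa_supp y. x u * y v * word (u @ v) w)
      = (\<Sum>uv\<in>fa_supp x \<times> fa_supp y. if fst uv @ snd uv = w then x (fst uv) * y (snd uv) else 0)"
    by (intro sum.cong) (auto simp: word_apply)
  also have "\<dots> = (\<Sum>uv\<in>?S. x (fst uv) * y (snd uv))"
    using assms by (simp add: sum.inter_filter)
  also have "\<dots> = (\<Sum>k\<in>(\<lambda>uv. length (fst uv)) ` ?S. x (take k w) * y (drop k w))"
  proof (rule sym, rule sum.reindex_cong[OF _ refl])
    show "inj_on (\<lambda>uv. length (fst uv)) ?S"
    proof (rule inj_onI)
      fix a b assume "a \<in> ?S" "b \<in> ?S" "length (fst a) = length (fst b)"
      then show "a = b"
        by (metis (mono_tags) append_eq_conv_conj mem_Collect_eq prod_eqI)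
    qed
  next
    fix uv assume "uv \<in> ?S"
    then show "x (take (length (fst uv)) w) * y (drop (length (fst uv)) w) = x (fst uv) * y (snd uv)"
      by auto
  qed
  also have "\<dots> = (\<Sum>k\<le>length w. x (take k w) * y (drop k w))"
  proof (rule sum.mono_neutral_left)
    show "(\<lambda>uv. length (fst uv)) ` ?S \<subseteq> {..length w}" by auto
    show "\<forall>k\<in>{..length w} - (\<lambda>uv. length (fst uv)) ` ?S. x (take k w) * y (drop k w) = 0"
    proof (rule ballI, rule ccontr)
      fix k assume k: "k \<in> {..length w} - (\<lambda>uv. length (fst uv)) ` ?S"
        and "x (take k w) * y (drop k w) \<noteq> 0"
      then have "(take k w, drop k w) \<in> ?S" by (auto simp: fa_supp_def)
      moreover have "length (take k w) = k" using k by auto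
      ultimately show False using k by (metis (no_types, lifting) DiffD2 fst_conv image_eqI)
    qed
  qed simp
  finally show ?thesis
    unfolding fa_mult_def by (rule sym)
qed

lemma fa_supp_mult_subset:
  assumes "finite (fa_supp x)" "finite (fa_supp y)"
  shows "fa_supp (fa_mult x y) \<subseteq> (\<lambda>(u, v). u @ v) ` (fa_supp x \<times> fa_supp y)"
proof
  fix w assume "w \<in> fa_supp (fa_mult x y)"
  then have "(\<Sum>(u, v)\<in>fa_supp x \<times> fa_supp y. x u * y v * word (u @ v) w) \<noteq> 0"
    using fa_mult_expand[OF assms] by (simp add: fa_supp_def)
  then obtain uv where "uv \<in> fa_supp x \<times> fa_supp y"
    and "(case uv of (u, v) \<Rightarrow> x u * y v * word (u @ v) w) \<noteq> 0"
    by (rule sum.not_neutral_contains_not_neutral)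
  then show "w \<in> (\<lambda>(u, v). u @ v) ` (fa_supp x \<times> fa_supp y)"
    by (cases uv) (auto simp: word_apply split: if_splits)
qed

lemma fa_supp_mult_wdeg:
  assumes "finite (fa_supp x)" "finite (fa_supp y)"
    and "\<And>u. u \<in> fa_supp x \<Longrightarrow> wdeg u = (a, b)" "\<And>v. v \<in> fa_supp y \<Longrightarrow> wdeg v = (a', b')"
    and "w \<in> fa_supp (fa_mult x y)"
  shows "wdeg w = (a + a', b + b')"
  using fa_supp_mult_subset[OF assms(1,2)] assms(3-5) by (auto simp: wdeg_append)

lemma finite_fa_supp_mult:
  "finite (fa_supp x) \<Longrightarrow> finite (fa_supp y) \<Longrightarrow> finite (fa_supp (fa_mult x y))"
  by (rule finite_subset[OF fa_supp_mult_subset]) auto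

lemma fa_mult_word: "fa_mult (word u) (word v) = word (u @ v)"
proof
  fix w
  show "fa_mult (word u) (word v) w = word (u @ v) w"
    using fa_mult_expand[of "word u" "word v" w] by (simp add: word_apply)
qed

lemma word_Cons: "word (i # w) = fa_mult (gen i) (word w)"
  by (simp add: gen_def fa_mult_word)

lemma fa_one_eq_word_Nil: "fa_one = word []"
  by (rule ext) (simp add: fa_one_def word_apply)

lemma fa_mult_one_right: "fa_mult x fa_one = x"
proof
  fix w
  have "fa_mult x fa_one w = (\<Sum>k\<le>length w. if k = length w then x w else 0)"
    unfolding fa_mult_def fa_one_def by (rule sum.cong) auto
  then show "fa_mult x fa_one w = x w" by simp
qed

lemma fa_mult_zero_right: "fa_mult x (\<lambda>_. 0) = (\<lambda>_. 0)"
  by (simp add: fa_mult_def)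

lemma Sk_eq_words: "Sk k = (\<lambda>w. \<Sum>i\<in>{1..<k}. (-1) ^ (i + 1) * word [i, k - i] w)"
  by (simp add: Sk_def gen_def fa_mult_word)

lemma fa_supp_Sk: "fa_supp (Sk k :: 'r::comm_ring_1 fa) \<subseteq> (\<lambda>i. [i, k - i]) ` {1..<k}"
proof
  fix w assume "w \<in> fa_supp (Sk k :: 'r fa)"
  then have "(\<Sum>i\<in>{1..<k}. (-1) ^ (i + 1) * word [i, k - i] w) \<noteq> (0::'r)"
    by (simp add: fa_supp_def Sk_eq_words)
  then obtain i where "i \<in> {1..<k}" "(-1) ^ (i + 1) * word [i, k - i] w \<noteq> (0::'r)"
    by (rule sum.not_neutral_contains_not_neutral)
  then show "w \<in> (\<lambda>i. [i, k - i]) ` {1..<k}"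
    by (auto simp: word_apply split: if_splits)
qed

lemma fa_elem_finite_fa_supp: "fa_elem c \<Longrightarrow> finite (fa_supp c)"
  by (simp add: fa_elem_def fa_supp_def)

lemma homog_finite_fa_supp: "homog ab c \<Longrightarrow> finite (fa_supp c)"
  by (simp add: homog_def fa_elem_finite_fa_supp)

lemma homog_wdeg: "homog ab c \<Longrightarrow> w \<in> fa_supp c \<Longrightarrow> wdeg w = ab"
  by (simp add: homog_def fa_supp_def)

lemma homog_letters: "homog ab c \<Longrightarrow> w \<in> fa_supp c \<Longrightarrow> \<forall>i\<in>set w. 1 \<le> i"
  by (simp add: homog_def fa_elem_def fa_supp_def)

lemma homogI:
  assumes "finite (fa_supp c)" "\<And>w. w \<in> fa_supp c \<Longrightarrow> wdeg w = ab \<and> (\<forall>i\<in>set w. 1 \<le> i)"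
  shows "homog ab c"
  using assms by (auto simp: homog_def fa_elem_def fa_supp_def)

lemma homog_zero: "homog ab (\<lambda>_. 0)"
  by (simp add: homog_def fa_elem_def)

lemma homog_word: "\<forall>i\<in>set w. 1 \<le> i \<Longrightarrow> homog (wdeg w) (word w)"
  by (rule homogI) auto

lemma homog_gen: "1 \<le> i \<Longrightarrow> homog (- int i, 1 - int i) (gen i)"
  by (rule homogI) (auto simp: wdeg_def)

lemma homog_partial_sum:
  assumes c: "homog ab c" and S: "S \<subseteq> fa_supp c"
  shows "homog ab (\<lambda>v. \<Sum>w\<in>S. c w * word w v)"
proof (rule homogI)
  have sub: "fa_supp (\<lambda>v. \<Sum>w\<in>S. c w * word w v) \<subseteq> S"
    by (auto simp: fa_supp_def word_apply intro: sum.neutral)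
  moreover have "finite S"
    using finite_subset[OF S homog_finite_fa_supp[OF c]] .
  ultimately show "finite (fa_supp (\<lambda>v. \<Sum>w\<in>S. c w * word w v))"
    by (rule finite_subset)
  fix w assume "w \<in> fa_supp (\<lambda>v. \<Sum>w\<in>S. c w * word w v)"
  then have "w \<in> fa_supp c" using sub S by blast
  then show "wdeg w = ab \<and> (\<forall>i\<in>set w. 1 \<le> i)"
    using c homog_wdeg homog_letters by blast
qed

lemma homog_Sk: "homog (- int k, 2 - int k) (Sk k)"
proof (rule homogI)
  show "finite (fa_supp (Sk k))"
    by (rule finite_subset[OF fa_supp_Sk]) simp
  fix w assume "w \<in> fa_supp (Sk k)"
  then obtain i where i: "i \<in> {1..<k}" and w: "w = [i, k - i]"
    using fa_supp_Sk by blast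
  have "1 \<le> i" "1 \<le> k - i" "i \<le> k"
    using i by auto
  then show "wdeg w = (- int k, 2 - int k) \<and> (\<forall>i\<in>set w. 1 \<le> i)"
    by (simp add: w wdeg_def of_nat_diff)
qed

definition fa_hcomp :: "int \<times> int \<Rightarrow> 'r::comm_ring_1 fa \<Rightarrow> 'r fa" where
  "fa_hcomp ab c = (\<lambda>w. if wdeg w = ab then c w else 0)"

lemma fa_hcomp_pure: "(\<And>w. w \<in> fa_supp c \<Longrightarrow> wdeg w = ab) \<Longrightarrow> fa_hcomp ab c = c"
  by (rule ext) (auto simp: fa_hcomp_def fa_supp_def)

lemma fa_supp_hcomp_subset: "fa_supp (fa_hcomp ab c) \<subseteq> fa_supp c"
  by (auto simp: fa_hcomp_def fa_supp_def)

lemma finite_fa_supp_hcomp: "finite (fa_supp c) \<Longrightarrow> finite (fa_supp (fa_hcomp ab c))"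
  by (rule finite_subset[OF fa_supp_hcomp_subset])

lemma delta_word_support:
  "finite (fa_supp (delta_word w :: 'r::comm_ring_1 fa))
   \<and> (\<forall>u\<in>fa_supp (delta_word w :: 'r fa). wdeg u = (fst (wdeg w), snd (wdeg w) + 1))"
proof (induction w)
  case Nil
  then show ?case by (simp add: fa_supp_def)
next
  case (Cons i w)
  let ?x = "fa_mult (Sk i) (word w) :: 'r fa" and ?y = "fa_mult (gen i) (delta_word w) :: 'r fa"
  let ?deg = "(fst (wdeg (i # w)), snd (wdeg (i # w)) + 1)"
  have fin_Sk: "finite (fa_supp (Sk i :: 'r fa))"
    using homog_Sk homog_finite_fa_supp by blast
  have deg_x: "wdeg u = ?deg" if "u \<in> fa_supp ?x" for u
    using fa_supp_mult_wdeg[where a' = "fst (wdeg w)" and b' = "snd (wdeg w)",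
        OF fin_Sk finite_fa_supp_word homog_wdeg[OF homog_Sk] _ that]
    by (simp add: wdeg_Cons algebra_simps)
  have deg_y: "wdeg u = ?deg" if "u \<in> fa_supp ?y" for u
    using fa_supp_mult_wdeg[of "gen i" "delta_word w" "- int i" "1 - int i"
        "fst (wdeg w)" "snd (wdeg w) + 1", OF _ _ _ _ that] Cons
    by (simp add: wdeg_Cons algebra_simps)
  have eq: "delta_word (i # w) = (\<lambda>v. ?x v + (-1) ^ (i + 1) * ?y v)"
    by (simp only: delta_word.simps)
  have "finite (fa_supp ?x)" "finite (fa_supp ?y)"
    using Cons fin_Sk by (simp_all add: finite_fa_supp_mult)
  then have "finite (fa_supp (delta_word (i # w) :: 'r fa))"
    unfolding eq by (intro finite_fa_supp_add finite_fa_supp_smult)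
  moreover have "fa_supp (delta_word (i # w) :: 'r fa) \<subseteq> fa_supp ?x \<union> fa_supp ?y"
    unfolding eq
    using fa_supp_add_subset[of ?x "\<lambda>v. (-1) ^ (i + 1) * ?y v"]
      fa_supp_smult_subset[of "(-1) ^ (i + 1)" ?y] by blast
  ultimately show ?case
    using deg_x deg_y by blast
qed

lemma delta0_eq: "delta0 c = (\<lambda>v. \<Sum>w\<in>fa_supp c. c w * delta_word w v)"
  by (simp add: delta0_def fa_supp_def)

lemma delta0_gen: "delta0 (gen k) = Sk k"
  by (simp add: delta0_eq gen_def word_apply fa_one_eq_word_Nil[symmetric]
      fa_mult_one_right fa_mult_zero_right)

lemma lin_map_in: "lin_map scale scale' S T f \<Longrightarrow> x \<in> S \<Longrightarrow> f x \<in> T"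
  by (simp add: lin_map_def)

lemma lin_map_add: "lin_map scale scale' S T f \<Longrightarrow> x \<in> S \<Longrightarrow> y \<in> S \<Longrightarrow> f (x + y) = f x + f y"
  by (simp add: lin_map_def)

lemma lin_map_scale: "lin_map scale scale' S T f \<Longrightarrow> x \<in> S \<Longrightarrow> f (scale r x) = scale' r (f x)"
  by (simp add: lin_map_def)

lemma lin_map_comp:
  "lin_map scale scale S U f \<Longrightarrow> lin_map scale scale U V g \<Longrightarrow> lin_map scale scale S V (\<lambda>x. g (f x))"
  by (simp add: lin_map_def)

locale bigraded =
  fixes scale :: "'r::comm_ring_1 \<Rightarrow> 'm::ab_group_add \<Rightarrow> 'm"
    and A :: "int \<Rightarrow> int \<Rightarrow> 'm set"
  assumes bigraded_module: "bigraded_module scale A"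
begin

sublocale module scale
  using bigraded_module by (simp add: bigraded_module_def)

lemma zero_in [simp]: "0 \<in> A p q"
  using bigraded_module by (simp add: bigraded_module_def)

lemma add_in: "x \<in> A p q \<Longrightarrow> y \<in> A p q \<Longrightarrow> x + y \<in> A p q"
  using bigraded_module by (simp add: bigraded_module_def)

lemma scale_in: "x \<in> A p q \<Longrightarrow> scale r x \<in> A p q"
  using bigraded_module by (simp add: bigraded_module_def)

lemma sum_in: "(\<And>i. i \<in> I \<Longrightarrow> g i \<in> A p q) \<Longrightarrow> sum g I \<in> A p q"
  by (induction I rule: infinite_finite_induct) (auto intro: add_in)

lemma lin_map_zero: "lin_map scale scale' (A p q) T f \<Longrightarrow> f 0 = 0"
  using lin_map_add[of scale scale' "A p q" T f 0 0] by simp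

lemma lin_map_sum:
  assumes "lin_map scale scale' (A p q) T f" "\<And>i. i \<in> I \<Longrightarrow> g i \<in> A p q"
  shows "f (sum g I) = (\<Sum>i\<in>I. f (g i))"
  using assms(2)
proof (induction I rule: infinite_finite_induct)
  case (insert i I)
  then show ?case using assms(1) by (simp add: lin_map_add sum_in)
qed (simp_all add: lin_map_zero[OF assms(1)])

lemma lin_map_sum_scaled:
  assumes "\<And>i. i \<in> I \<Longrightarrow> lin_map scale scale S (A p q) (f i)"
  shows "lin_map scale scale S (A p q) (\<lambda>x. \<Sum>i\<in>I. scale (c i) (f i x))"
  unfolding lin_map_def
proof (intro conjI ballI allI)
  fix x assume "x \<in> S"
  then show "(\<Sum>i\<in>I. scale (c i) (f i x)) \<in> A p q"
    using assms by (intro sum_in scale_in) (auto intro: lin_map_in)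
next
  fix x y assume "x \<in> S" "y \<in> S"
  then have "scale (c i) (f i (x + y)) = scale (c i) (f i x) + scale (c i) (f i y)" if "i \<in> I" for i
    using assms[OF that] by (simp add: lin_map_add scale_right_distrib)
  then show "(\<Sum>i\<in>I. scale (c i) (f i (x + y))) = (\<Sum>i\<in>I. scale (c i) (f i x)) + (\<Sum>i\<in>I. scale (c i) (f i y))"
    by (simp add: sum.distrib[symmetric])
next
  fix r x assume "x \<in> S"
  then have "scale (c i) (f i (scale r x)) = scale r (scale (c i) (f i x))" if "i \<in> I" for i
    using assms[OF that] by (simp add: lin_map_scale mult.commute)
  then show "(\<Sum>i\<in>I. scale (c i) (f i (scale r x))) = scale r (\<Sum>i\<in>I. scale (c i) (f i x))"
    by (simp add: scale_sum_right del: scale_scale)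
qed

definition graded_linear :: "(nat \<Rightarrow> int \<Rightarrow> int \<Rightarrow> 'm \<Rightarrow> 'm) \<Rightarrow> bool" where
  "graded_linear d \<longleftrightarrow>
     (\<forall>i p q. lin_map scale scale (A p q) (A (p - int i) (q + 1 - int i)) (d i p q))"

end

section \<open>The action of the free algebra induced by a family of maps\<close>

text \<open>The head of a word is its leftmost letter, so it acts last, in the bidegree reached by the rest.\<close>
primrec word_act :: "(nat \<Rightarrow> int \<Rightarrow> int \<Rightarrow> 'm \<Rightarrow> 'm) \<Rightarrow> nat list \<Rightarrow> int \<Rightarrow> int \<Rightarrow> 'm \<Rightarrow> 'm" where
  "word_act d [] p q m = m"
| "word_act d (i # w) p q m = d i (p + fst (wdeg w)) (q + snd (wdeg w)) (word_act d w p q m)"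

definition fa_act ::
  "('r::comm_ring_1 \<Rightarrow> 'm::ab_group_add \<Rightarrow> 'm) \<Rightarrow> (nat \<Rightarrow> int \<Rightarrow> int \<Rightarrow> 'm \<Rightarrow> 'm)
   \<Rightarrow> 'r fa \<Rightarrow> int \<Rightarrow> int \<Rightarrow> 'm \<Rightarrow> 'm" where
  "fa_act scale d c p q m = (\<Sum>w\<in>fa_supp c. scale (c w) (word_act d w p q m))"

lemma word_act_append:
  "word_act d (u @ v) p q m = word_act d u (p + fst (wdeg v)) (q + snd (wdeg v)) (word_act d v p q m)"
  by (induction u) (simp_all add: wdeg_append algebra_simps)

context bigraded
begin

lemma word_act_lin:
  assumes "graded_linear d"
  shows "lin_map scale scale (A p q) (A (p + fst (wdeg w)) (q + snd (wdeg w))) (word_act d w p q)"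
proof (induction w)
  case Nil
  then show ?case by (simp add: lin_map_def)
next
  case (Cons i w)
  have "lin_map scale scale (A (p + fst (wdeg w)) (q + snd (wdeg w)))
     (A (p + fst (wdeg w) - int i) (q + snd (wdeg w) + 1 - int i)) (d i (p + fst (wdeg w)) (q + snd (wdeg w)))"
    using assms by (simp add: graded_linear_def)
  then have "lin_map scale scale (A (p + fst (wdeg w)) (q + snd (wdeg w)))
     (A (p + fst (wdeg (i # w))) (q + snd (wdeg (i # w)))) (d i (p + fst (wdeg w)) (q + snd (wdeg w)))"
    by (simp add: wdeg_Cons algebra_simps)
  from lin_map_comp[OF Cons this] show ?case by simp
qed

lemma word_act_in:
  "graded_linear d \<Longrightarrow> m \<in> A p q \<Longrightarrow> word_act d w p q m \<in> A (p + fst (wdeg w)) (q + snd (wdeg w))"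
  using word_act_lin lin_map_in by blast

lemma fa_act_superset:
  assumes "finite S" "fa_supp c \<subseteq> S"
  shows "fa_act scale d c p q m = (\<Sum>w\<in>S. scale (c w) (word_act d w p q m))"
  unfolding fa_act_def
  by (rule sum.mono_neutral_left) (use assms in \<open>auto simp: fa_supp_def\<close>)

lemma fa_act_sum:
  assumes "finite I" "\<And>i. i \<in> I \<Longrightarrow> finite (fa_supp (f i))"
  shows "fa_act scale d (\<lambda>w. \<Sum>i\<in>I. f i w) p q m = (\<Sum>i\<in>I. fa_act scale d (f i) p q m)"
proof -
  let ?S = "\<Union>i\<in>I. fa_supp (f i)"
  have fin: "finite ?S" using assms by auto
  have "fa_act scale d (\<lambda>w. \<Sum>i\<in>I. f i w) p q m = (\<Sum>w\<in>?S. scale (\<Sum>i\<in>I. f i w) (word_act d w p q m))"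
    using fa_act_superset[OF fin fa_supp_sum_subset] .
  also have "\<dots> = (\<Sum>i\<in>I. \<Sum>w\<in>?S. scale (f i w) (word_act d w p q m))"
    by (simp add: scale_sum_left sum.swap[of _ ?S])
  also have "\<dots> = (\<Sum>i\<in>I. fa_act scale d (f i) p q m)"
    by (intro sum.cong refl fa_act_superset[symmetric] fin) auto
  finally show ?thesis .
qed

lemma fa_act_smult:
  assumes "finite (fa_supp c)"
  shows "fa_act scale d (\<lambda>w. r * c w) p q m = scale r (fa_act scale d c p q m)"
proof -
  have "fa_act scale d (\<lambda>w. r * c w) p q m = (\<Sum>w\<in>fa_supp c. scale (r * c w) (word_act d w p q m))"
    using fa_act_superset[OF assms fa_supp_smult_subset] .
  then show ?thesis
    by (simp add: fa_act_def scale_sum_right)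
qed

lemma fa_act_add:
  assumes "finite (fa_supp c)" "finite (fa_supp c')"
  shows "fa_act scale d (\<lambda>w. c w + c' w) p q m = fa_act scale d c p q m + fa_act scale d c' p q m"
  using fa_act_sum[of "{True, False}" "\<lambda>i. if i then c else c'" d p q m] assms by simp

lemma fa_act_word: "fa_act scale d (word u) p q m = word_act d u p q m"
  by (simp add: fa_act_def word_apply)

lemma fa_act_gen: "fa_act scale d (gen i) p q m = d i p q m"
  by (simp add: gen_def fa_act_word)

lemma fa_act_zero: "fa_act scale d (\<lambda>_. 0) p q m = 0"
  by (simp add: fa_act_def fa_supp_def)

lemma fa_act_filter_mult:
  assumes fx: "finite (fa_supp x)" and fy: "finite (fa_supp y)"
  shows "fa_act scale d (\<lambda>w. if P w then fa_mult x y w else 0) p q m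
    = (\<Sum>u\<in>fa_supp x. \<Sum>v\<in>fa_supp y.
         if P (u @ v) then scale (x u * y v) (word_act d (u @ v) p q m) else 0)"
proof -
  let ?f = "\<lambda>(u, v) w. (if P (u @ v) then x u * y v else 0) * word (u @ v) w"
  have eq: "(\<lambda>w. if P w then fa_mult x y w else 0) = (\<lambda>w. \<Sum>uv\<in>fa_supp x \<times> fa_supp y. ?f uv w)"
  proof
    fix w
    show "(if P w then fa_mult x y w else 0) = (\<Sum>uv\<in>fa_supp x \<times> fa_supp y. ?f uv w)"
      by (cases "P w")
        (auto simp: fa_mult_expand[OF fx fy] word_apply intro!: sum.cong sum.neutral)
  qed
  have fin: "finite (fa_supp (?f uv))" for uv
    by (cases uv) (simp add: finite_fa_supp_smult)
  have "fa_act scale d (\<lambda>w. if P w then fa_mult x y w else 0) p q m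
      = (\<Sum>uv\<in>fa_supp x \<times> fa_supp y. fa_act scale d (?f uv) p q m)"
    unfolding eq using fx fy fin by (intro fa_act_sum) auto
  also have "\<dots> = (\<Sum>(u, v)\<in>fa_supp x \<times> fa_supp y.
         if P (u @ v) then scale (x u * y v) (word_act d (u @ v) p q m) else 0)"
    by (intro sum.cong refl) (auto simp: fa_act_smult fa_act_word)
  finally show ?thesis
    by (simp add: sum.cartesian_product)
qed

lemma fa_act_lin:
  assumes "graded_linear d" "\<And>w. w \<in> fa_supp c \<Longrightarrow> wdeg w = (a, b)"
  shows "lin_map scale scale (A p q) (A (p + a) (q + b)) (fa_act scale d c p q)"
proof -
  have "lin_map scale scale (A p q) (A (p + a) (q + b)) (word_act d w p q)" if "w \<in> fa_supp c" for w
    using word_act_lin[OF assms(1), of p q w] assms(2)[OF that] by simp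
  then show ?thesis
    unfolding fa_act_def[abs_def] by (rule lin_map_sum_scaled)
qed

lemma fa_act_in:
  "graded_linear d \<Longrightarrow> (\<And>w. w \<in> fa_supp c \<Longrightarrow> wdeg w = (a, b)) \<Longrightarrow> m \<in> A p q
   \<Longrightarrow> fa_act scale d c p q m \<in> A (p + a) (q + b)"
  using fa_act_lin lin_map_in by blast

lemma fa_act_hcomp_expand:
  "fa_act scale d (fa_hcomp ab c) p q m
    = (\<Sum>w\<in>fa_supp c. if wdeg w = ab then scale (c w) (word_act d w p q m) else 0)"
  if "finite (fa_supp c)"
  by (subst fa_act_superset[OF that fa_supp_hcomp_subset]) (auto simp: fa_hcomp_def intro!: sum.cong)

lemma word_act_fa_act_hcomp:
  assumes d: "graded_linear d" and y: "finite (fa_supp y)" and m: "m \<in> A p q"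
  shows "word_act d u (p + a) (q + b) (fa_act scale d (fa_hcomp (a, b) y) p q m)
    = (\<Sum>v\<in>fa_supp y. if wdeg v = (a, b) then scale (y v) (word_act d (u @ v) p q m) else 0)"
proof -
  have lin: "lin_map scale scale (A (p + a) (q + b)) (A (p + a + fst (wdeg u)) (q + b + snd (wdeg u)))
      (word_act d u (p + a) (q + b))"
    using word_act_lin[OF d] .
  have "(if wdeg v = (a, b) then scale (y v) (word_act d v p q m) else 0) \<in> A (p + a) (q + b)" for v
    using word_act_in[OF d m, of v] by (auto intro: scale_in)
  then have "word_act d u (p + a) (q + b) (fa_act scale d (fa_hcomp (a, b) y) p q m)
    = (\<Sum>v\<in>fa_supp y. word_act d u (p + a) (q + b)
         (if wdeg v = (a, b) then scale (y v) (word_act d v p q m) else 0))"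
    unfolding fa_act_hcomp_expand[OF y] by (rule lin_map_sum[OF lin])
  also have "\<dots> = (\<Sum>v\<in>fa_supp y. if wdeg v = (a, b) then scale (y v) (word_act d (u @ v) p q m) else 0)"
  proof (intro sum.cong refl)
    fix v
    show "word_act d u (p + a) (q + b) (if wdeg v = (a, b) then scale (y v) (word_act d v p q m) else 0)
      = (if wdeg v = (a, b) then scale (y v) (word_act d (u @ v) p q m) else 0)"
    proof (cases "wdeg v = (a, b)")
      case True
      then have "word_act d v p q m \<in> A (p + a) (q + b)"
        using word_act_in[OF d m, of v] by simp
      then show ?thesis
        using True by (simp add: lin_map_scale[OF lin] word_act_append)
    qed (simp add: lin_map_zero[OF lin])
  qed
  finally show ?thesis .
qed

lemma fa_act_mult:
  assumes d: "graded_linear d" and x: "finite (fa_supp x)" and y: "finite (fa_supp y)"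
    and deg_y: "\<And>v. v \<in> fa_supp y \<Longrightarrow> wdeg v = (a, b)" and m: "m \<in> A p q"
  shows "fa_act scale d (fa_mult x y) p q m = fa_act scale d x (p + a) (q + b) (fa_act scale d y p q m)"
proof -
  have "fa_act scale d (fa_mult x y) p q m
      = (\<Sum>u\<in>fa_supp x. \<Sum>v\<in>fa_supp y. scale (x u * y v) (word_act d (u @ v) p q m))"
    using fa_act_filter_mult[OF x y, of d "\<lambda>_. True"] by simp
  also have "\<dots> = (\<Sum>u\<in>fa_supp x. scale (x u) (\<Sum>v\<in>fa_supp y.
      if wdeg v = (a, b) then scale (y v) (word_act d (u @ v) p q m) else 0))"
    using deg_y by (simp add: scale_sum_right)
  also have "\<dots> = (\<Sum>u\<in>fa_supp x. scale (x u) (word_act d u (p + a) (q + b) (fa_act scale d y p q m)))"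
  proof -
    have "fa_hcomp (a, b) y = y"
      using deg_y by (rule fa_hcomp_pure)
    then show ?thesis
      using word_act_fa_act_hcomp[OF d y m, of _ a b] by simp
  qed
  also have "\<dots> = fa_act scale d x (p + a) (q + b) (fa_act scale d y p q m)"
    by (simp add: fa_act_def)
  finally show ?thesis .
qed

lemma fa_act_hcomp_mult_left:
  assumes d: "graded_linear d" and x: "finite (fa_supp x)" and y: "finite (fa_supp y)"
    and m: "m \<in> A p q"
  shows "fa_act scale d (fa_hcomp (a, b) (fa_mult x y)) p q m
    = (\<Sum>u\<in>fa_supp x. scale (x u) (word_act d u (p + (a - fst (wdeg u))) (q + (b - snd (wdeg u)))
         (fa_act scale d (fa_hcomp (a - fst (wdeg u), b - snd (wdeg u)) y) p q m)))"
proof -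
  have "fa_act scale d (fa_hcomp (a, b) (fa_mult x y)) p q m
      = (\<Sum>u\<in>fa_supp x. \<Sum>v\<in>fa_supp y. if wdeg v = (a - fst (wdeg u), b - snd (wdeg u))
           then scale (x u * y v) (word_act d (u @ v) p q m) else 0)"
    unfolding fa_hcomp_def fa_act_filter_mult[OF x y] wdeg_append_eq_iff_right ..
  also have "\<dots> = (\<Sum>u\<in>fa_supp x. scale (x u) (\<Sum>v\<in>fa_supp y. if wdeg v = (a - fst (wdeg u), b - snd (wdeg u))
           then scale (y v) (word_act d (u @ v) p q m) else 0))"
    unfolding scale_sum_right by (intro sum.cong refl) auto
  finally show ?thesis
    by (simp only: word_act_fa_act_hcomp[OF d y m])
qed

lemma fa_act_hcomp_mult_right:
  assumes x: "finite (fa_supp x)" and y: "finite (fa_supp y)"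
  shows "fa_act scale d (fa_hcomp (a, b) (fa_mult x y)) p q m
    = (\<Sum>v\<in>fa_supp y. scale (y v) (fa_act scale d (fa_hcomp (a - fst (wdeg v), b - snd (wdeg v)) x)
         (p + fst (wdeg v)) (q + snd (wdeg v)) (word_act d v p q m)))"
proof -
  have "fa_act scale d (fa_hcomp (a, b) (fa_mult x y)) p q m
      = (\<Sum>v\<in>fa_supp y. \<Sum>u\<in>fa_supp x. if wdeg u = (a - fst (wdeg v), b - snd (wdeg v))
           then scale (x u * y v) (word_act d (u @ v) p q m) else 0)"
    unfolding fa_hcomp_def fa_act_filter_mult[OF x y] wdeg_append_eq_iff_left by (rule sum.swap)
  also have "\<dots> = (\<Sum>v\<in>fa_supp y. scale (y v) (fa_act scale d (fa_hcomp (a - fst (wdeg v), b - snd (wdeg v)) x)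
         (p + fst (wdeg v)) (q + snd (wdeg v)) (word_act d v p q m)))"
    unfolding fa_act_hcomp_expand[OF x] scale_sum_right
    by (intro sum.cong refl) (auto simp: word_act_append mult.commute)
  finally show ?thesis .
qed

section \<open>Multicomplexes are modules\<close>

lemma fa_act_Sk:
  "fa_act scale d (Sk l) P Q x = (\<Sum>i\<in>{1..<l}. scale ((-1) ^ (i + 1)) (word_act d [i, l - i] P Q x))"
proof -
  have "fa_act scale d (Sk l) P Q x = (\<Sum>i\<in>{1..<l}. fa_act scale d (\<lambda>w. (-1) ^ (i + 1) * word [i, l - i] w) P Q x)"
    unfolding Sk_eq_words by (rule fa_act_sum) (simp, intro finite_fa_supp_smult, simp)
  then show ?thesis
    by (simp only: fa_act_smult finite_fa_supp_word fa_act_word)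
qed

lemma relation_sum_split:
  assumes "1 \<le> l"
  shows "(\<Sum>j\<le>l. scale ((-1) ^ (l - j)) (d (l - j) (P - int j) (Q + 1 - int j) (d j P Q x)))
    = d 0 (P - int l) (Q + 1 - int l) (d l P Q x) + scale ((-1) ^ l) (d l P (Q + 1) (d 0 P Q x))
      - fa_act scale d (Sk l) P Q x"
proof -
  let ?g = "\<lambda>j. scale ((-1) ^ (l - j)) (d (l - j) (P - int j) (Q + 1 - int j) (d j P Q x))"
  have "{..l} = insert 0 (insert l {1..<l})" using assms by auto
  then have "(\<Sum>j\<le>l. ?g j) = ?g 0 + (?g l + (\<Sum>j\<in>{1..<l}. ?g j))"
    using assms by (simp add: sum.insert)
  also have "(\<Sum>j\<in>{1..<l}. ?g j) = (\<Sum>i\<in>{1..<l}. ?g (l - i))"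
    by (subst sum.atLeastLessThan_rev) simp
  also have "\<dots> = - fa_act scale d (Sk l) P Q x"
    unfolding fa_act_Sk sum_negf[symmetric]
  proof (rule sum.cong[OF refl])
    fix i assume "i \<in> {1..<l}"
    then have "l - (l - i) = i" by auto
    moreover have "word_act d [i, l - i] P Q x = d i (P - int (l - i)) (Q + 1 - int (l - i)) (d (l - i) P Q x)"
      by (simp add: wdeg_def algebra_simps)
    ultimately show "?g (l - i) = - scale ((-1) ^ (i + 1)) (word_act d [i, l - i] P Q x)"
      by simp
  qed
  finally show ?thesis by (simp add: algebra_simps)
qed

lemma multicomplex_graded_linear: "multicomplex n scale A d \<Longrightarrow> graded_linear d"
  by (simp add: multicomplex_def graded_linear_def)

lemma multicomplex_d0_lin:
  "multicomplex n scale A d \<Longrightarrow> lin_map scale scale (A p q) (A p (q + 1)) (d 0 p q)"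
  using multicomplex_graded_linear[unfolded graded_linear_def] by (metis add_0_right diff_zero of_nat_0)

lemma multicomplex_relation:
  "multicomplex n scale A d \<Longrightarrow> x \<in> A P Q \<Longrightarrow>
    (\<Sum>j\<le>l. scale ((-1) ^ (l - j)) (d (l - j) (P - int j) (Q + 1 - int j) (d j P Q x))) = 0"
  by (simp add: multicomplex_def)

lemma multicomplex_d0_d:
  assumes "multicomplex n scale A d" "1 \<le> l" "x \<in> A P Q"
  shows "d 0 (P - int l) (Q + 1 - int l) (d l P Q x)
    = fa_act scale d (Sk l) P Q x - scale ((-1) ^ l) (d l P (Q + 1) (d 0 P Q x))"
proof -
  have "d 0 (P - int l) (Q + 1 - int l) (d l P Q x) + scale ((-1) ^ l) (d l P (Q + 1) (d 0 P Q x))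
      - fa_act scale d (Sk l) P Q x = 0"
    using relation_sum_split[OF assms(2), of d P Q x] multicomplex_relation[OF assms(1,3)] by simp
  then show ?thesis
    by (simp add: algebra_simps)
qed

lemma fa_act_delta_word_Cons:
  assumes d: "graded_linear d" and m: "m \<in> A p q"
  shows "fa_act scale d (delta_word (i # w)) p q m
    = fa_act scale d (Sk i) (p + fst (wdeg w)) (q + snd (wdeg w)) (word_act d w p q m)
      + scale ((-1) ^ (i + 1))
          (d i (p + fst (wdeg w)) (q + snd (wdeg w) + 1) (fa_act scale d (delta_word w) p q m))"
proof -
  let ?x = "fa_mult (Sk i) (word w) :: 'r fa" and ?y = "fa_mult (gen i) (delta_word w) :: 'r fa"
  have fin_Sk: "finite (fa_supp (Sk i :: 'r fa))"
    using homog_Sk homog_finite_fa_supp by blast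
  have fin_dw: "finite (fa_supp (delta_word w :: 'r fa))"
    and deg_dw: "\<And>v. v \<in> fa_supp (delta_word w :: 'r fa) \<Longrightarrow> wdeg v = (fst (wdeg w), snd (wdeg w) + 1)"
    using delta_word_support by blast+
  have "fa_act scale d (delta_word (i # w)) p q m
      = fa_act scale d ?x p q m + scale ((-1) ^ (i + 1)) (fa_act scale d ?y p q m)"
    using fin_Sk fin_dw
    by (simp only: delta_word.simps fa_act_add fa_act_smult finite_fa_supp_mult finite_fa_supp_smult
        finite_fa_supp_word fa_supp_gen finite.emptyI finite_insert)
  moreover have "fa_act scale d ?x p q m
      = fa_act scale d (Sk i) (p + fst (wdeg w)) (q + snd (wdeg w)) (word_act d w p q m)"
    using fa_act_mult[OF d fin_Sk finite_fa_supp_word, of w "fst (wdeg w)" "snd (wdeg w)"] m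
    by (simp add: fa_act_word)
  moreover have "fa_act scale d ?y p q m
      = d i (p + fst (wdeg w)) (q + snd (wdeg w) + 1) (fa_act scale d (delta_word w) p q m)"
    using fa_act_mult[OF d _ fin_dw deg_dw m, of "gen i"]
    by (simp add: gen_def fa_act_word add.assoc)
  ultimately show ?thesis
    by simp
qed

lemma d0_word_act:
  assumes mc: "multicomplex n scale A d" and m: "m \<in> A p q" and w: "\<forall>i\<in>set w. 1 \<le> i"
  shows "d 0 (p + fst (wdeg w)) (q + snd (wdeg w)) (word_act d w p q m)
    = fa_act scale d (delta_word w) p q m
      + scale (if even (snd (wdeg w)) then 1 else -1) (word_act d w p (q + 1) (d 0 p q m))"
  using w
proof (induction w)
  case Nil
  then show ?case by (simp add: fa_act_zero)
next
  case (Cons i w)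
  have d: "graded_linear d" using mc by (rule multicomplex_graded_linear)
  define P where "P = p + fst (wdeg w)"
  define Q where "Q = q + snd (wdeg w)"
  define x where "x = word_act d w p q m"
  define sg where "sg = (if even (snd (wdeg w)) then 1 else -1 :: 'r)"
  have x: "x \<in> A P Q"
    unfolding x_def P_def Q_def using word_act_in[OF d m] .
  have IH: "d 0 P Q x = fa_act scale d (delta_word w) p q m + scale sg (word_act d w p (q + 1) (d 0 p q m))"
    using Cons unfolding P_def Q_def x_def sg_def by simp
  have lin: "lin_map scale scale (A P (Q + 1)) (A (P - int i) (Q + 1 + 1 - int i)) (d i P (Q + 1))"
    using d[unfolded graded_linear_def, rule_format, where i=i and p=P and q="Q + 1"] .
  have "fa_act scale d (delta_word w) p q m \<in> A (p + fst (wdeg w)) (q + (snd (wdeg w) + 1))"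
    by (rule fa_act_in[OF d _ m]) (use delta_word_support in blast)
  then have in_delta: "fa_act scale d (delta_word w) p q m \<in> A P (Q + 1)"
    unfolding P_def Q_def by (simp add: add.assoc)
  have in_word: "word_act d w p (q + 1) (d 0 p q m) \<in> A P (Q + 1)"
    using word_act_in[OF d lin_map_in[OF multicomplex_d0_lin[OF mc] m], of w]
    unfolding P_def Q_def by (simp add: algebra_simps)
  have "d 0 (p + fst (wdeg (i # w))) (q + snd (wdeg (i # w))) (word_act d (i # w) p q m)
      = d 0 (P - int i) (Q + 1 - int i) (d i P Q x)"
    by (simp add: P_def Q_def x_def wdeg_Cons algebra_simps)
  also have "\<dots> = fa_act scale d (Sk i) P Q x - scale ((-1) ^ i) (d i P (Q + 1) (d 0 P Q x))"
    using multicomplex_d0_d[OF mc _ x] Cons.prems by simp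
  also have "\<dots> = fa_act scale d (Sk i) P Q x
      - scale ((-1) ^ i) (d i P (Q + 1) (fa_act scale d (delta_word w) p q m))
      - scale ((-1) ^ i * sg) (d i P (Q + 1) (word_act d w p (q + 1) (d 0 p q m)))"
    unfolding IH using in_delta in_word
    by (simp add: lin_map_add[OF lin] lin_map_scale[OF lin] scale_in scale_right_distrib)
  also have "\<dots> = fa_act scale d (delta_word (i # w)) p q m
      + scale (if even (snd (wdeg (i # w))) then 1 else -1) (word_act d (i # w) p (q + 1) (d 0 p q m))"
    unfolding fa_act_delta_word_Cons[OF d m] wdeg_Cons snd_conv parity_sign_Cons
    by (simp add: P_def Q_def x_def sg_def algebra_simps)
  finally show ?case .
qed

lemma fa_act_delta0:
  assumes "finite (fa_supp c)"
  shows "fa_act scale d (delta0 c) p q m = (\<Sum>w\<in>fa_supp c. scale (c w) (fa_act scale d (delta_word w) p q m))"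
proof -
  have fin: "finite (fa_supp (delta_word w :: 'r fa))" for w
    using delta_word_support by blast
  show ?thesis
    unfolding delta0_eq using assms fin
    by (simp add: fa_act_sum fa_act_smult finite_fa_supp_smult)
qed

lemma d0_fa_act:
  assumes mc: "multicomplex n scale A d" and c: "homog (a, b) c" and m: "m \<in> A p q"
  shows "d 0 (p + a) (q + b) (fa_act scale d c p q m)
    = fa_act scale d (delta0 c) p q m
      + scale (if even b then 1 else -1) (fa_act scale d c p (q + 1) (d 0 p q m))"
proof -
  have d: "graded_linear d" using mc by (rule multicomplex_graded_linear)
  have lin: "lin_map scale scale (A (p + a) (q + b)) (A (p + a) (q + b + 1)) (d 0 (p + a) (q + b))"
    using multicomplex_d0_lin[OF mc] .
  have deg: "\<And>w. w \<in> fa_supp c \<Longrightarrow> wdeg w = (a, b)"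
    using c by (rule homog_wdeg)
  have "d 0 (p + a) (q + b) (fa_act scale d c p q m)
      = (\<Sum>w\<in>fa_supp c. d 0 (p + a) (q + b) (scale (c w) (word_act d w p q m)))"
    unfolding fa_act_def using word_act_in[OF d m] deg
    by (intro lin_map_sum[OF lin]) (metis fst_conv scale_in snd_conv)
  also have "\<dots> = (\<Sum>w\<in>fa_supp c. scale (c w) (fa_act scale d (delta_word w) p q m)
      + scale (if even b then 1 else -1) (scale (c w) (word_act d w p (q + 1) (d 0 p q m))))"
  proof (rule sum.cong[OF refl])
    fix w assume w: "w \<in> fa_supp c"
    have "d 0 (p + a) (q + b) (scale (c w) (word_act d w p q m))
        = scale (c w) (d 0 (p + a) (q + b) (word_act d w p q m))"
      using lin_map_scale[OF lin] word_act_in[OF d m, of w] deg[OF w] by simp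
    also have "\<dots> = scale (c w) (fa_act scale d (delta_word w) p q m
        + scale (if even b then 1 else -1) (word_act d w p (q + 1) (d 0 p q m)))"
      using d0_word_act[OF mc m homog_letters[OF c w]] deg[OF w] by simp
    finally show "d 0 (p + a) (q + b) (scale (c w) (word_act d w p q m))
        = scale (c w) (fa_act scale d (delta_word w) p q m)
          + scale (if even b then 1 else -1) (scale (c w) (word_act d w p (q + 1) (d 0 p q m)))"
      by (simp add: scale_right_distrib mult.commute)
  qed
  also have "\<dots> = fa_act scale d (delta0 c) p q m
      + scale (if even b then 1 else -1) (fa_act scale d c p (q + 1) (d 0 p q m))"
    using homog_finite_fa_supp[OF c]
    by (simp add: fa_act_delta0 sum.distrib scale_sum_right fa_act_def[of scale d c])
  finally show ?thesis .
qed

text \<open>Requiring every homogeneous component to act by zero, not just c itself, makes the property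
stable under multiplication by the inhomogeneous elements that the ideal allows.\<close>
definition annihilates :: "(nat \<Rightarrow> int \<Rightarrow> int \<Rightarrow> 'm \<Rightarrow> 'm) \<Rightarrow> 'r fa \<Rightarrow> bool" where
  "annihilates d c \<longleftrightarrow> finite (fa_supp c) \<and>
     (\<forall>a b p q. \<forall>m\<in>A p q. fa_act scale d (fa_hcomp (a, b) c) p q m = 0)"

lemma annihilates_homog:
  assumes "annihilates d c" "homog (a, b) c" "m \<in> A p q"
  shows "fa_act scale d c p q m = 0"
proof -
  have "fa_hcomp (a, b) c = c"
    using homog_wdeg[OF assms(2)] by (rule fa_hcomp_pure)
  then show ?thesis
    using assms(1,3) unfolding annihilates_def by metis
qed

lemma annihilates_zero: "annihilates d (\<lambda>_. 0)"
  by (simp add: annihilates_def fa_hcomp_def fa_act_zero fa_supp_def)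

lemma annihilates_pure:
  assumes "finite (fa_supp c)" "\<And>w. w \<in> fa_supp c \<Longrightarrow> wdeg w = ab"
    and "\<And>p q m. m \<in> A p q \<Longrightarrow> fa_act scale d c p q m = 0"
  shows "annihilates d c"
proof -
  have "fa_hcomp ab' c = (if ab' = ab then c else (\<lambda>_. 0))" for ab'
    using assms(2) by (intro ext) (auto simp: fa_hcomp_def fa_supp_def)
  then show ?thesis
    using assms(1,3) by (simp add: annihilates_def fa_act_zero)
qed

lemma annihilates_add:
  assumes "annihilates d x" "annihilates d y"
  shows "annihilates d (\<lambda>w. x w + y w)"
proof -
  have "fa_hcomp ab (\<lambda>w. x w + y w) = (\<lambda>w. fa_hcomp ab x w + fa_hcomp ab y w)" for ab
    by (auto simp: fa_hcomp_def)
  moreover have "finite (fa_supp (fa_hcomp ab x))" "finite (fa_supp (fa_hcomp ab y))" for ab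
    using assms by (auto simp: annihilates_def finite_fa_supp_hcomp)
  ultimately show ?thesis
    using assms by (simp add: annihilates_def fa_act_add finite_fa_supp_add)
qed

lemma annihilates_mult_left:
  assumes d: "graded_linear d" and a: "finite (fa_supp a)" and x: "annihilates d x"
  shows "annihilates d (fa_mult a x)"
proof -
  have fin: "finite (fa_supp x)" using x by (simp add: annihilates_def)
  have "fa_act scale d (fa_hcomp (a0, b0) (fa_mult a x)) p q m = 0" if m: "m \<in> A p q" for a0 b0 p q m
    unfolding fa_act_hcomp_mult_left[OF d a fin m]
    using x m lin_map_zero[OF word_act_lin[OF d]] by (simp add: annihilates_def)
  then show ?thesis
    using a fin by (simp add: annihilates_def finite_fa_supp_mult)
qed

lemma annihilates_mult_right:
  assumes d: "graded_linear d" and a: "finite (fa_supp a)" and x: "annihilates d x"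
  shows "annihilates d (fa_mult x a)"
proof -
  have fin: "finite (fa_supp x)" using x by (simp add: annihilates_def)
  have "fa_act scale d (fa_hcomp (a0, b0) (fa_mult x a)) p q m = 0" if m: "m \<in> A p q" for a0 b0 p q m
    unfolding fa_act_hcomp_mult_right[OF fin a]
    using x word_act_in[OF d m] by (simp add: annihilates_def)
  then show ?thesis
    using a fin by (simp add: annihilates_def finite_fa_supp_mult)
qed

lemma multicomplex_annihilates_ideal:
  assumes mc: "multicomplex n scale A d" and "c \<in> In_ideal n"
  shows "annihilates d c"
  using assms(2)
proof (induction rule: In_ideal.induct)
  case zero
  show ?case by (rule annihilates_zero)
next
  case (gen_d k)
  have "d k p q m = 0" if "m \<in> A p q" for p q m
    using mc gen_d that by (simp add: multicomplex_def)
  then show ?case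
    by (intro annihilates_pure[where ab = "wdeg [k]"]) (simp_all add: fa_act_gen)
next
  case (gen_S k)
  have d_k: "d k p q m = 0" if "m \<in> A p q" for p q m
    using mc gen_S that by (simp add: multicomplex_def)
  have "fa_act scale d (Sk k) p q m = 0" if m: "m \<in> A p q" for p q m
    using multicomplex_d0_d[OF mc gen_S(1) m] d_k[OF m] d_k[OF lin_map_in[OF multicomplex_d0_lin[OF mc] m]]
      lin_map_zero[OF multicomplex_d0_lin[OF mc]] by simp
  then show ?case
    using homog_finite_fa_supp[OF homog_Sk] homog_wdeg[OF homog_Sk]
    by (intro annihilates_pure[where ab = "(- int k, 2 - int k)"]) auto
next
  case (add x y)
  then show ?case by (simp add: annihilates_add)
next
  case (mult_left x a)
  then show ?case
    using multicomplex_graded_linear[OF mc] by (simp add: annihilates_mult_left fa_elem_finite_fa_supp)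
next
  case (mult_right x a)
  then show ?case
    using multicomplex_graded_linear[OF mc] by (simp add: annihilates_mult_right fa_elem_finite_fa_supp)
qed

lemma multicomplex_vbicomplex:
  assumes mc: "multicomplex n scale A d"
  shows "vbicomplex scale A (d 0)"
  unfolding vbicomplex_def
proof (intro conjI allI ballI)
  show "bigraded_module scale A" by (rule bigraded_module)
  show "lin_map scale scale (A p q) (A p (q + 1)) (d 0 p q)" for p q
    by (rule multicomplex_d0_lin[OF mc])
  show "d 0 p (q + 1) (d 0 p q m) = 0" if "m \<in> A p q" for p q m
    using multicomplex_relation[OF mc that, of 0] by simp
qed

lemma multicomplex_Cn_module:
  assumes mc: "multicomplex n scale A d"
  shows "Cn_module n scale A (d 0) (\<lambda>p q c. fa_act scale d c p q)"
proof -
  have d: "graded_linear d" using mc by (rule multicomplex_graded_linear)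
  show ?thesis
    unfolding Cn_module_def
  proof (intro conjI allI impI ballI)
    show "vbicomplex scale A (d 0)"
      using mc by (rule multicomplex_vbicomplex)
  next
    fix a b p q and c :: "'r fa" assume "homog (a, b) c"
    then show "lin_map scale scale (A p q) (A (p + a) (q + b)) (fa_act scale d c p q)"
      using fa_act_lin[OF d] homog_wdeg by blast
  next
    fix a b p q c c' m assume "homog (a, b) (c :: 'r fa)" "homog (a, b) (c' :: 'r fa)"
    then show "fa_act scale d (\<lambda>w. c w + c' w) p q m = fa_act scale d c p q m + fa_act scale d c' p q m"
      by (simp add: fa_act_add homog_finite_fa_supp)
  next
    fix a b p q c r m assume "homog (a, b) (c :: 'r fa)"
    then show "fa_act scale d (\<lambda>w. r * c w) p q m = scale r (fa_act scale d c p q m)"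
      by (simp add: fa_act_smult homog_finite_fa_supp)
  next
    fix p q m
    show "fa_act scale d fa_one p q m = m"
      by (simp add: fa_one_eq_word_Nil fa_act_word)
  next
    fix a b a' b' p q c c' m
    assume "homog (a, b) (c :: 'r fa)" "homog (a', b') (c' :: 'r fa)" "m \<in> A p q"
    then show "fa_act scale d (fa_mult c c') p q m = fa_act scale d c (p + a') (q + b') (fa_act scale d c' p q m)"
      by (intro fa_act_mult[OF d]) (auto simp: homog_finite_fa_supp homog_wdeg)
  next
    fix a b p q c m assume "homog (a, b) (c :: 'r fa)" "c \<in> In_ideal n" "m \<in> A p q"
    then show "fa_act scale d c p q m = 0"
      using multicomplex_annihilates_ideal[OF mc] annihilates_homog by blast
  next
    fix a b p q c m assume "homog (a, b) (c :: 'r fa)" "m \<in> A p q"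
    then show "d 0 (p + a) (q + b) (fa_act scale d c p q m)
      = fa_act scale d (delta0 c) p q m + scale (if even b then 1 else -1) (fa_act scale d c p (q + 1) (d 0 p q m))"
      by (rule d0_fa_act[OF mc])
  qed
qed

section \<open>Modules are multicomplexes\<close>

context
  fixes n d0 lam
  assumes module: "Cn_module n scale A d0 lam"
begin

lemma Cn_module_vbicomplex: "vbicomplex scale A d0"
  using module by (simp add: Cn_module_def)

lemma Cn_module_lin: "homog (a, b) c \<Longrightarrow> lin_map scale scale (A p q) (A (p + a) (q + b)) (lam p q c)"
  using module by (simp add: Cn_module_def)

lemma Cn_module_add:
  "homog (a, b) c \<Longrightarrow> homog (a, b) c' \<Longrightarrow> m \<in> A p q \<Longrightarrow>
   lam p q (\<lambda>w. c w + c' w) m = lam p q c m + lam p q c' m"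
  using module by (simp add: Cn_module_def)

lemma Cn_module_smult:
  assumes "homog (a, b) c" "m \<in> A p q"
  shows "lam p q (\<lambda>w. r * c w) m = scale r (lam p q c m)"
proof -
  have "\<forall>a b p q c r. homog (a, b) c \<longrightarrow> (\<forall>m\<in>A p q. lam p q (\<lambda>w. r * c w) m = scale r (lam p q c m))"
    using module by (simp add: Cn_module_def)
  then show ?thesis
    using assms by blast
qed

lemma Cn_module_one: "m \<in> A p q \<Longrightarrow> lam p q fa_one m = m"
  using module by (simp add: Cn_module_def)

lemma Cn_module_mult:
  assumes "homog (a, b) c" "homog (a', b') c'" "m \<in> A p q"
  shows "lam p q (fa_mult c c') m = lam (p + a') (q + b') c (lam p q c' m)"
proof -
  have "\<forall>a b a' b' p q c c'. homog (a, b) c \<longrightarrow> homog (a', b') c' \<longrightarrow>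
      (\<forall>m\<in>A p q. lam p q (fa_mult c c') m = lam (p + a') (q + b') c (lam p q c' m))"
    using module by (simp add: Cn_module_def)
  then show ?thesis
    using assms by blast
qed

lemma Cn_module_ideal: "homog (a, b) c \<Longrightarrow> c \<in> In_ideal n \<Longrightarrow> m \<in> A p q \<Longrightarrow> lam p q c m = 0"
  using module unfolding Cn_module_def by blast

lemma Cn_module_d0:
  "homog (a, b) c \<Longrightarrow> m \<in> A p q \<Longrightarrow> d0 (p + a) (q + b) (lam p q c m)
     = lam p q (delta0 c) m + scale (if even b then 1 else -1) (lam p (q + 1) c (d0 p q m))"
  using module unfolding Cn_module_def by blast

lemma Cn_module_zero: "m \<in> A p q \<Longrightarrow> lam p q (\<lambda>_. 0) m = 0"
  using Cn_module_add[OF homog_zero homog_zero, of m p q] by simp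

lemma assoc_d_graded_linear: "graded_linear (assoc_d d0 lam)"
  unfolding graded_linear_def
proof (intro allI)
  fix i p q
  show "lin_map scale scale (A p q) (A (p - int i) (q + 1 - int i)) (assoc_d d0 lam i p q)"
  proof (cases "i = 0")
    case True
    then show ?thesis using Cn_module_vbicomplex by (simp add: vbicomplex_def assoc_d_def)
  next
    case False
    then have "lin_map scale scale (A p q) (A (p + - int i) (q + (1 - int i))) (lam p q (gen i))"
      by (intro Cn_module_lin homog_gen) simp
    then show ?thesis
      using False by (simp add: assoc_d_def algebra_simps)
  qed
qed

lemma Cn_module_word:
  "\<forall>i\<in>set w. 1 \<le> i \<Longrightarrow> m \<in> A p q \<Longrightarrow> lam p q (word w) m = word_act (assoc_d d0 lam) w p q m"
proof (induction w)
  case Nil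
  then show ?case by (simp add: Cn_module_one flip: fa_one_eq_word_Nil)
next
  case (Cons i w)
  have hw: "homog (fst (wdeg w), snd (wdeg w)) (word w)"
    using homog_word[of w] Cons.prems by simp
  have "lam p q (word (i # w)) m = lam (p + fst (wdeg w)) (q + snd (wdeg w)) (gen i) (lam p q (word w) m)"
    unfolding word_Cons using Cn_module_mult[OF homog_gen[of i] hw Cons.prems(2)] Cons.prems by simp
  then show ?case
    using Cons by (simp add: assoc_d_def)
qed

lemma Cn_module_eq_fa_act:
  assumes c: "homog (a, b) c" and m: "m \<in> A p q"
  shows "lam p q c m = fa_act scale (assoc_d d0 lam) c p q m"
proof -
  have fin: "finite (fa_supp c)"
    using c by (rule homog_finite_fa_supp)
  have "lam p q (\<lambda>v. \<Sum>w\<in>S. c w * word w v) m = (\<Sum>w\<in>S. scale (c w) (word_act (assoc_d d0 lam) w p q m))"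
    if "S \<subseteq> fa_supp c" for S
    using finite_subset[OF that fin] that
  proof (induction S rule: finite_subset_induct')
    case empty
    then show ?case using Cn_module_zero[OF m] by simp
  next
    case (insert x S)
    have hx: "homog (a, b) (word x)"
      using homog_word[OF homog_letters[OF c insert(2)]] homog_wdeg[OF c insert(2)] by simp
    have h_x: "homog (a, b) (\<lambda>v. c x * word x v)"
      using homog_partial_sum[OF c, of "{x}"] insert(2) by simp
    have h_S: "homog (a, b) (\<lambda>v. \<Sum>w\<in>S. c w * word w v)"
      using homog_partial_sum[OF c insert(3)] .
    have "lam p q (\<lambda>v. \<Sum>w\<in>insert x S. c w * word w v) m
        = lam p q (\<lambda>v. c x * word x v + (\<Sum>w\<in>S. c w * word w v)) m"
      using insert by simp
    also have "\<dots> = lam p q (\<lambda>v. c x * word x v) m + lam p q (\<lambda>v. \<Sum>w\<in>S. c w * word w v) m"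
      by (rule Cn_module_add[OF h_x h_S m])
    also have "lam p q (\<lambda>v. c x * word x v) m = scale (c x) (word_act (assoc_d d0 lam) x p q m)"
      using Cn_module_smult[OF hx m] Cn_module_word[OF homog_letters[OF c insert(2)] m] by simp
    finally show ?case
      using insert by simp
  qed
  from this[of "fa_supp c"] show ?thesis
    by (simp add: fa_sum_words[OF fin] fa_act_def)
qed

lemma Cn_module_multicomplex:
  assumes n: "1 \<le> n"
  shows "multicomplex n scale A (assoc_d d0 lam)"
proof -
  let ?d = "assoc_d d0 lam"
  have rel: "(\<Sum>j\<le>l. scale ((-1) ^ (l - j)) (?d (l - j) (p - int j) (q + 1 - int j) (?d j p q m))) = 0"
    if m: "m \<in> A p q" for l p q m
  proof (cases "l = 0")
    case True
    then show ?thesis using Cn_module_vbicomplex m by (simp add: vbicomplex_def assoc_d_def)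
  next
    case False
    then have l: "1 \<le> l" by simp
    have "d0 (p + - int l) (q + (1 - int l)) (lam p q (gen l) m)
        = lam p q (Sk l) m - scale ((-1) ^ l) (lam p (q + 1) (gen l) (d0 p q m))"
      using Cn_module_d0[OF homog_gen[OF l] m] parity_sign_Cons[of 0 l] by (simp add: delta0_gen)
    moreover have "lam p q (Sk l) m = fa_act scale ?d (Sk l) p q m"
      by (rule Cn_module_eq_fa_act[OF homog_Sk m])
    ultimately show ?thesis
      unfolding relation_sum_split[OF l] using False by (simp add: assoc_d_def algebra_simps)
  qed
  have vanish: "?d i p q m = 0" if "n \<le> enat i" "m \<in> A p q" for i p q m
  proof -
    have i: "1 \<le> i"
      using n that(1) by (metis enat_ord_simps(1) one_enat_def order_trans)
    then have "gen i \<in> In_ideal n"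
      using that(1) by (rule In_ideal.gen_d)
    then show ?thesis
      using Cn_module_ideal[OF homog_gen[OF i] _ that(2)] i by (simp add: assoc_d_def)
  qed
  show ?thesis
    unfolding multicomplex_def
    using bigraded_module assoc_d_graded_linear rel vanish by (simp add: graded_linear_def)
qed

end

section \<open>Uniqueness and morphisms\<close>

lemma word_act_cong:
  assumes d: "graded_linear d" and eq: "\<And>i p q x. x \<in> A p q \<Longrightarrow> d i p q x = d' i p q x"
    and m: "m \<in> A p q"
  shows "word_act d w p q m = word_act d' w p q m"
proof (induction w)
  case (Cons i w)
  then show ?case using eq word_act_in[OF d m, of w] by simp
qed simp

lemma word_act_morphism:
  assumes d: "graded_linear d"
    and comm: "\<And>i p q m. m \<in> A p q \<Longrightarrow> f (p - int i) (q + 1 - int i) (d i p q m) = e i p q (f p q m)"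
    and m: "m \<in> A p q"
  shows "f (p + fst (wdeg w)) (q + snd (wdeg w)) (word_act d w p q m) = word_act e w p q (f p q m)"
proof (induction w)
  case (Cons i w)
  have "f (p + fst (wdeg (i # w))) (q + snd (wdeg (i # w))) (word_act d (i # w) p q m)
      = f (p + fst (wdeg w) - int i) (q + snd (wdeg w) + 1 - int i)
          (d i (p + fst (wdeg w)) (q + snd (wdeg w)) (word_act d w p q m))"
    by (simp add: wdeg_Cons algebra_simps)
  also have "\<dots> = e i (p + fst (wdeg w)) (q + snd (wdeg w))
      (f (p + fst (wdeg w)) (q + snd (wdeg w)) (word_act d w p q m))"
    by (rule comm[OF word_act_in[OF d m]])
  finally show ?case using Cons by simp
qed simp

lemma fa_act_morphism:
  assumes d: "graded_linear d"
    and comm: "\<And>i p q m. m \<in> A p q \<Longrightarrow> f (p - int i) (q + 1 - int i) (d i p q m) = e i p q (f p q m)"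
    and f: "\<And>p q. lin_map scale scale' (A p q) (B p q) (f p q)"
    and c: "homog (a, b) c" and m: "m \<in> A p q"
  shows "f (p + a) (q + b) (fa_act scale d c p q m) = fa_act scale' e c p q (f p q m)"
proof -
  have deg: "\<And>w. w \<in> fa_supp c \<Longrightarrow> wdeg w = (a, b)"
    using c by (rule homog_wdeg)
  have "f (p + a) (q + b) (fa_act scale d c p q m)
      = (\<Sum>w\<in>fa_supp c. f (p + a) (q + b) (scale (c w) (word_act d w p q m)))"
    unfolding fa_act_def using word_act_in[OF d m] deg
    by (intro lin_map_sum[OF f]) (metis fst_conv scale_in snd_conv)
  also have "\<dots> = (\<Sum>w\<in>fa_supp c. scale' (c w) (word_act e w p q (f p q m)))"
  proof (rule sum.cong[OF refl])
    fix w assume "w \<in> fa_supp c"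
    then show "f (p + a) (q + b) (scale (c w) (word_act d w p q m)) = scale' (c w) (word_act e w p q (f p q m))"
      using lin_map_scale[OF f] word_act_in[OF d m, of w] word_act_morphism[where f=f and e=e, OF d comm m, of w] deg
      by simp
  qed
  also have "\<dots> = fa_act scale' e c p q (f p q m)"
    by (simp add: fa_act_def)
  finally show ?thesis .
qed

end

lemma Cn_module_bigraded: "Cn_module n scale A d0 lam \<Longrightarrow> bigraded scale A"
  by (simp add: Cn_module_def vbicomplex_def bigraded_def)

lemma multicomplex_bigraded: "multicomplex n scale A d \<Longrightarrow> bigraded scale A"
  by (simp add: multicomplex_def bigraded_def)

lemma Cn_module_imp_multicomplex:
  "1 \<le> n \<Longrightarrow> Cn_module n scale A d0 lam \<Longrightarrow> multicomplex n scale A (assoc_d d0 lam)"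
  using bigraded.Cn_module_multicomplex[OF Cn_module_bigraded] by blast

lemma multicomplex_imp_Cn_module:
  assumes "multicomplex n scale A d"
  shows "\<exists>lam. Cn_module n scale A (d 0) lam \<and>
    (\<forall>i p q. 1 \<le> i \<longrightarrow> (\<forall>m\<in>A p q. lam p q (gen i) m = d i p q m))"
proof -
  interpret bigraded scale A
    using assms by (rule multicomplex_bigraded)
  show ?thesis
    using multicomplex_Cn_module[OF assms] by (auto simp: fa_act_gen)
qed

lemma Cn_module_unique:
  assumes lam: "Cn_module n scale A d0 lam" and lam': "Cn_module n scale A d0 lam'"
    and gen: "\<forall>i p q. 1 \<le> i \<longrightarrow> (\<forall>m\<in>A p q. lam p q (gen i) m = lam' p q (gen i) m)"
    and c: "homog (a, b) c" and m: "m \<in> A p q"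
  shows "lam p q c m = lam' p q c m"
proof -
  interpret bigraded scale A
    using lam by (rule Cn_module_bigraded)
  have "assoc_d d0 lam i P Q x = assoc_d d0 lam' i P Q x" if "x \<in> A P Q" for i P Q x
    using gen that by (simp add: assoc_d_def)
  then have "word_act (assoc_d d0 lam) w p q m = word_act (assoc_d d0 lam') w p q m" for w
    using word_act_cong[OF assoc_d_graded_linear[OF lam] _ m] by blast
  then show ?thesis
    unfolding Cn_module_eq_fa_act[OF lam c m] Cn_module_eq_fa_act[OF lam' c m] fa_act_def by simp
qed

lemma Cn_module_morphism_iff_multicomplex_morphism:
  assumes lam: "Cn_module n scale A d0 lam" and mu: "Cn_module n scale' B e0 mu"
  shows "Cn_module_morphism scale scale' A B d0 e0 lam mu f
    \<longleftrightarrow> multicomplex_morphism scale scale' A B (assoc_d d0 lam) (assoc_d e0 mu) f"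
proof
  assume f: "Cn_module_morphism scale scale' A B d0 e0 lam mu f"
  have "f (p + - int i) (q + (1 - int i)) (lam p q (gen i) m) = mu p q (gen i) (f p q m)"
    if "1 \<le> i" "m \<in> A p q" for i p q m
    using f homog_gen[OF that(1)] that(2) unfolding Cn_module_morphism_def by blast
  then show "multicomplex_morphism scale scale' A B (assoc_d d0 lam) (assoc_d e0 mu) f"
    using f by (auto simp: multicomplex_morphism_def Cn_module_morphism_def assoc_d_def algebra_simps)
next
  interpret A: bigraded scale A
    using lam by (rule Cn_module_bigraded)
  interpret B: bigraded scale' B
    using mu by (rule Cn_module_bigraded)
  assume f: "multicomplex_morphism scale scale' A B (assoc_d d0 lam) (assoc_d e0 mu) f"
  have lin: "\<And>p q. lin_map scale scale' (A p q) (B p q) (f p q)"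
    and comm: "\<And>i p q m. m \<in> A p q \<Longrightarrow>
      f (p - int i) (q + 1 - int i) (assoc_d d0 lam i p q m) = assoc_d e0 mu i p q (f p q m)"
    using f by (simp_all add: multicomplex_morphism_def)
  have "f (p + a) (q + b) (lam p q c m) = mu p q c (f p q m)"
    if c: "homog (a, b) c" and m: "m \<in> A p q" for a b p q c m
    using A.fa_act_morphism[OF A.assoc_d_graded_linear[OF lam] comm lin c m]
      A.Cn_module_eq_fa_act[OF lam c m] B.Cn_module_eq_fa_act[OF mu c lin_map_in[OF lin m]]
    by simp
  moreover have "f p (q + 1) (d0 p q m) = e0 p q (f p q m)" if "m \<in> A p q" for p q m
    using comm[OF that, of 0] by (simp add: assoc_d_def)
  ultimately show "Cn_module_morphism scale scale' A B d0 e0 lam mu f"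
    using lin by (simp add: Cn_module_morphism_def)
qed

theorem mainTheorem12:
  fixes n :: enat
    and scale :: "'r::comm_ring_1 \<Rightarrow> 'm::ab_group_add \<Rightarrow> 'm"
    and A :: "int \<Rightarrow> int \<Rightarrow> 'm set"
    and scale' :: "'r \<Rightarrow> 'n::ab_group_add \<Rightarrow> 'n"
    and B :: "int \<Rightarrow> int \<Rightarrow> 'n set"
  assumes "1 \<le> n"
  shows
    \<comment> \<open>modules give n-multicomplexes\<close>
    "(\<forall>d0 lam. Cn_module n scale A d0 lam \<longrightarrow> multicomplex n scale A (assoc_d d0 lam))
   \<and> \<comment> \<open>every n-multicomplex arises from a module structure\<close>
     (\<forall>d. multicomplex n scale A d \<longrightarrow>
        (\<exists>lam. Cn_module n scale A (d 0) lam \<and>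
           (\<forall>i p q. 1 \<le> i \<longrightarrow> (\<forall>m\<in>A p q. lam p q (gen i) m = d i p q m))))
   \<and> \<comment> \<open>and the module structure is determined by the multicomplex\<close>
     (\<forall>d0 lam lam'. Cn_module n scale A d0 lam \<longrightarrow> Cn_module n scale A d0 lam' \<longrightarrow>
        (\<forall>i p q. 1 \<le> i \<longrightarrow> (\<forall>m\<in>A p q. lam p q (gen i) m = lam' p q (gen i) m)) \<longrightarrow>
        (\<forall>a b p q c. homog (a, b) c \<longrightarrow> (\<forall>m\<in>A p q. lam p q c m = lam' p q c m)))
   \<and> \<comment> \<open>module morphisms are exactly the multicomplex morphisms\<close>
     (\<forall>d0 lam e0 mu f. Cn_module n scale A d0 lam \<longrightarrow> Cn_module n scale' B e0 mu \<longrightarrow>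
        (Cn_module_morphism scale scale' A B d0 e0 lam mu f \<longleftrightarrow>
         multicomplex_morphism scale scale' A B (assoc_d d0 lam) (assoc_d e0 mu) f))"
proof (intro conjI allI impI ballI)
  fix d0 lam
  show "Cn_module n scale A d0 lam \<Longrightarrow> multicomplex n scale A (assoc_d d0 lam)"
    by (rule Cn_module_imp_multicomplex[OF assms])
next
  fix d
  show "multicomplex n scale A d \<Longrightarrow> \<exists>lam. Cn_module n scale A (d 0) lam \<and>
      (\<forall>i p q. 1 \<le> i \<longrightarrow> (\<forall>m\<in>A p q. lam p q (gen i) m = d i p q m))"
    by (rule multicomplex_imp_Cn_module)
next
  fix d0 lam lam' a b p q c m
  assume "Cn_module n scale A d0 lam" "Cn_module n scale A d0 lam'"
    "\<forall>i p q. 1 \<le> i \<longrightarrow> (\<forall>m\<in>A p q. lam p q (gen i) m = lam' p q (gen i) m)"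
    "homog (a, b) (c :: 'r fa)" "m \<in> A p q"
  then show "lam p q c m = lam' p q c m"
    by (rule Cn_module_unique)
next
  fix d0 lam e0 mu f
  assume "Cn_module n scale A d0 lam" "Cn_module n scale' B e0 mu"
  then show "Cn_module_morphism scale scale' A B d0 e0 lam mu f
      \<longleftrightarrow> multicomplex_morphism scale scale' A B (assoc_d d0 lam) (assoc_d e0 mu) f"
    by (rule Cn_module_morphism_iff_multicomplex_morphism)
qed

end
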